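(* Let $\mathscr{X}$ be a finite nonempty set of possible samples, and identify a dataset with its vector of multiplicities $\mathcal{D}\in\mathbb{N}^{|\mathscr{X}|}$, so that $\|\mathcal{D}\|_1$ is its number of samples and $\|\mathcal{D}-\mathcal{D}'\|_1$ is the distance between two datasets. Let $\Lambda\in\mathbb{N}^*$ be a minimum support, let $\beta>0$, and let $\mathcal{D}\in\mathbb{N}^{|\mathscr{X}|}$ with $\|\mathcal{D}\|_1\ge \Lambda$. Define $$g:\mathbb{R}^+\to[0,1],\qquad g(x)=1-\Big(\frac{x}{x+1}\Big)^2-\Big(\frac{1}{x+1}\Big)^2,$$ and $$\xi_{\mathcal{D},\beta}:\mathbb{N}\to\mathbb{R}^+,\qquad \xi_{\mathcal{D},\beta}(k)=e^{-k\beta}\, g\big(\max(\Lambda,\|\mathcal{D}\|_1-k)\big).$$ Let $t=\|\mathcal{D}\|_1-\dfrac{1-\beta-\sqrt{(1-\beta)^2-4\beta}}{2\beta}$ when this expression is well defined (i.e. $(1-\beta)^2-4\beta\ge 0$ and the resulting value is $\ge 0$), and $t=0$ otherwise. Then the smooth sensitivity of the Gini impurity at $\mathcal{D}$ (as defined in the context) satisfies $$S^*_{\mathcal{G},\beta}(\mathcal{D})=\max\Big[\xi_{\mathcal{D},\beta}(0),\ \xi_{\mathcal{D},\beta}(\lfloor t\rfloor),\ \xi_{\mathcal{D},\beta}(\lceil t\rceil),\ \xi_{\mathcal{D},\beta}(\|\mathcal{D}\|_1-\Lambda)\Big].$$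
   Context: Setting: binary classification with a rule being evaluated on the dataset $\mathcal{D}$ of samples remaining to be classified. The local sensitivity of the Gini impurity at a dataset $\mathcal{D}'$ is $LS_{\mathcal{G}}(\mathcal{D}')=g(\|\mathcal{D}'\|_1)$ with $g$ as in the claim. Given the minimum support $\Lambda$ (only datasets with at least $\Lambda$ samples are considered), define for $k\in\mathbb{N}$ $$\mathcal{T}_k(\mathcal{D})=\max\{LS_{\mathcal{G}}(\mathcal{D}') : \mathcal{D}'\in\mathbb{N}^{|\mathscr{X}|},\ \|\mathcal{D}'-\mathcal{D}\|_1\le k,\ \|\mathcal{D}'\|_1\ge\Lambda\},$$ and the smooth sensitivity of the Gini impurity as $S^*_{\mathcal{G},\beta}(\mathcal{D})=\max_{k\in\mathbb{N}} e^{-\beta k}\,\mathcal{T}_k(\mathcal{D})$. *)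

theory Defs
  imports Complex_Main
begin

definition l1norm :: "('x::finite \<Rightarrow> nat) \<Rightarrow> nat" where
  "l1norm D = (\<Sum>x\<in>UNIV. D x)"

definition l1dist :: "('x::finite \<Rightarrow> nat) \<Rightarrow> ('x \<Rightarrow> nat) \<Rightarrow> nat" where
  "l1dist D D' = (\<Sum>x\<in>UNIV. nat \<bar>int (D x) - int (D' x)\<bar>)"

definition gfun :: "real \<Rightarrow> real" where
  "gfun x = 1 - (x / (x + 1))^2 - (1 / (x + 1))^2"

definition LS_gini :: "('x::finite \<Rightarrow> nat) \<Rightarrow> real" where
  "LS_gini D' = gfun (real (l1norm D'))"

definition T_k :: "nat \<Rightarrow> nat \<Rightarrow> ('x::finite \<Rightarrow> nat) \<Rightarrow> real" where
  "T_k \<Lambda> k D = Sup {LS_gini D' | D'. l1dist D' D \<le> k \<and> l1norm D' \<ge> \<Lambda>}"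

definition smooth_sens_gini :: "nat \<Rightarrow> real \<Rightarrow> ('x::finite \<Rightarrow> nat) \<Rightarrow> real" where
  "smooth_sens_gini \<Lambda> \<beta> D = (SUP k\<in>(UNIV::nat set). exp (- \<beta> * real k) * T_k \<Lambda> k D)"

definition xi :: "nat \<Rightarrow> real \<Rightarrow> ('x::finite \<Rightarrow> nat) \<Rightarrow> nat \<Rightarrow> real" where
  "xi \<Lambda> \<beta> D k = exp (- real k * \<beta>) * gfun (max (real \<Lambda>) (real (l1norm D) - real k))"

definition t_crit :: "real \<Rightarrow> ('x::finite \<Rightarrow> nat) \<Rightarrow> real" where
  "t_crit \<beta> D =
     (let \<Delta> = (1 - \<beta>)^2 - 4 * \<beta>;
          v = real (l1norm D) - (1 - \<beta> - sqrt \<Delta>) / (2 * \<beta>)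
      in if \<Delta> \<ge> 0 \<and> v \<ge> 0 then v else 0)"

end

theory Submission
  imports Defs
begin

text \<open>
  Shrinking a dataset lowers its size by exactly the distance travelled, and \<open>g\<close> decreases
  on \<open>[1, \<infinity>)\<close>, so \<open>T\<^sub>k(D) = g(max(\<Lambda>, \<parallel>D\<parallel>\<^sub>1 - k))\<close> and \<open>S\<^sup>*\<close> is the supremum of \<open>\<xi>(k)\<close>
  over all \<open>k\<close>. For \<open>k \<le> \<parallel>D\<parallel>\<^sub>1 - \<Lambda>\<close>, \<open>\<xi>(k)\<close> is a constant multiple of \<open>e\<^bsup>\<beta>y\<^esup> g(y)\<close> at
  \<open>y = \<parallel>D\<parallel>\<^sub>1 - k\<close>, whose derivative has the sign of \<open>\<beta>y\<^sup>2 + (\<beta> - 1)y + 1\<close>. Hence \<open>\<xi>\<close>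
  decreases, then increases up to \<open>t\<close> (the smaller root seen from \<open>\<parallel>D\<parallel>\<^sub>1\<close>), then decreases
  again, also beyond \<open>\<parallel>D\<parallel>\<^sub>1 - \<Lambda>\<close> where only the exponential factor varies. Its largest
  value on the integers is therefore taken at \<open>0\<close>, \<open>\<lfloor>t\<rfloor>\<close>, \<open>\<lceil>t\<rceil>\<close> or \<open>\<parallel>D\<parallel>\<^sub>1 - \<Lambda>\<close>.
\<close>

lemma gfun_eq: "x \<noteq> -1 \<Longrightarrow> gfun x = 2 * x / (x + 1)^2"
proof -
  assume "x \<noteq> -1"
  then have "x + 1 \<noteq> 0" by argo
  then have "gfun x = ((x + 1)^2 - x^2 - 1) / (x + 1)^2"
    unfolding gfun_def power_divide by (simp add: diff_divide_distrib)
  then show ?thesis by (simp add: power2_eq_square algebra_simps)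
qed

lemma gfun_nonneg: "0 \<le> x \<Longrightarrow> 0 \<le> gfun x"
  by (simp add: gfun_eq)

lemma gfun_antimono:
  assumes "1 \<le> a" "a \<le> b"
  shows "gfun b \<le> gfun a"
proof -
  have "0 \<le> (b - a) * (a * b - 1)"
    using assms mult_mono[of 1 a 1 b] by (intro mult_nonneg_nonneg) auto
  then have "2 * b * (a + 1)^2 \<le> 2 * a * (b + 1)^2"
    by (simp add: power2_eq_square algebra_simps)
  then show ?thesis
    using assms by (simp add: gfun_eq divide_simps)
qed

definition crit_poly :: "real \<Rightarrow> real \<Rightarrow> real" where
  "crit_poly \<beta> y = \<beta> * y^2 + (\<beta> - 1) * y + 1"

lemma has_real_derivative_exp_gfun:
  assumes "y \<noteq> -1"
  shows "((\<lambda>y. exp (\<beta> * y) * gfun y) has_real_derivative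
           2 * exp (\<beta> * y) * crit_poly \<beta> y / (y + 1)^3) (at y)"
proof (rule has_field_derivative_transform_within_open[where S = "- {-1}"])
  have "y + 1 \<noteq> 0" using assms by argo
  then show "((\<lambda>y. exp (\<beta> * y) * (2 * y / (y + 1)^2)) has_real_derivative
           2 * exp (\<beta> * y) * crit_poly \<beta> y / (y + 1)^3) (at y)"
    unfolding crit_poly_def
    by (auto intro!: derivative_eq_intros simp: divide_simps) algebra
qed (use assms gfun_eq in auto)

lemma continuous_on_exp_gfun:
  assumes "-1 < a"
  shows "continuous_on {a..b} (\<lambda>y. exp (\<beta> * y) * gfun y)"
  using assms has_real_derivative_exp_gfun DERIV_isCont
  by (intro continuous_at_imp_continuous_on) force

lemma exp_gfun_mono:
  assumes "-1 < a" "a \<le> b" and nonneg: "\<And>y. a < y \<Longrightarrow> y < b \<Longrightarrow> 0 \<le> crit_poly \<beta> y"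
  shows "exp (\<beta> * a) * gfun a \<le> exp (\<beta> * b) * gfun b"
proof (rule DERIV_nonneg_imp_increasing_open[OF \<open>a \<le> b\<close> _ continuous_on_exp_gfun[OF \<open>-1 < a\<close>]])
  fix y assume "a < y" "y < b"
  then have "0 \<le> 2 * exp (\<beta> * y) * crit_poly \<beta> y / (y + 1)^3"
    using \<open>-1 < a\<close> nonneg by simp
  moreover have "y \<noteq> -1"
    using \<open>-1 < a\<close> \<open>a < y\<close> by simp
  ultimately show "\<exists>d. ((\<lambda>y. exp (\<beta> * y) * gfun y) has_real_derivative d) (at y) \<and> 0 \<le> d"
    using has_real_derivative_exp_gfun by blast
qed

lemma exp_gfun_antimono:
  assumes "-1 < a" "a \<le> b" and nonpos: "\<And>y. a < y \<Longrightarrow> y < b \<Longrightarrow> crit_poly \<beta> y \<le> 0"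
  shows "exp (\<beta> * b) * gfun b \<le> exp (\<beta> * a) * gfun a"
proof (rule DERIV_nonpos_imp_decreasing_open[OF \<open>a \<le> b\<close> _ continuous_on_exp_gfun[OF \<open>-1 < a\<close>]])
  fix y assume "a < y" "y < b"
  then have "2 * exp (\<beta> * y) * crit_poly \<beta> y / (y + 1)^3 \<le> 0"
    using \<open>-1 < a\<close> nonpos by (simp add: divide_nonpos_pos mult_nonneg_nonpos)
  moreover have "y \<noteq> -1"
    using \<open>-1 < a\<close> \<open>a < y\<close> by simp
  ultimately show "\<exists>d. ((\<lambda>y. exp (\<beta> * y) * gfun y) has_real_derivative d) (at y) \<and> d \<le> 0"
    using has_real_derivative_exp_gfun by blast
qed

definition crit_disc :: "real \<Rightarrow> real" where
  "crit_disc \<beta> = (1 - \<beta>)^2 - 4 * \<beta>"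

definition crit_root_lo :: "real \<Rightarrow> real" where
  "crit_root_lo \<beta> = (1 - \<beta> - sqrt (crit_disc \<beta>)) / (2 * \<beta>)"

definition crit_root_hi :: "real \<Rightarrow> real" where
  "crit_root_hi \<beta> = (1 - \<beta> + sqrt (crit_disc \<beta>)) / (2 * \<beta>)"

lemma crit_poly_pos:
  assumes "0 < \<beta>" "crit_disc \<beta> < 0"
  shows "0 < crit_poly \<beta> y"
proof -
  have "4 * \<beta> * crit_poly \<beta> y = (2 * \<beta> * y + \<beta> - 1)^2 - crit_disc \<beta>"
    unfolding crit_poly_def crit_disc_def by algebra
  also have "\<dots> > 0"
    using assms(2) zero_le_power2[of "2 * \<beta> * y + \<beta> - 1"] by linarith
  finally show ?thesis
    using assms(1) by (simp add: zero_less_mult_iff)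
qed

lemma crit_poly_eq_roots:
  assumes "0 < \<beta>" "0 \<le> crit_disc \<beta>"
  shows "crit_poly \<beta> y = \<beta> * (y - crit_root_lo \<beta>) * (y - crit_root_hi \<beta>)"
proof -
  define r where "r = sqrt (crit_disc \<beta>)"
  have r2: "r^2 = crit_disc \<beta>"
    unfolding r_def using assms(2) by simp
  have "\<beta> * (y - crit_root_lo \<beta>) * (y - crit_root_hi \<beta>)
      = (4 * \<beta>^2 * y^2 - 4 * \<beta> * (1 - \<beta>) * y + ((1 - \<beta>)^2 - r^2)) / (4 * \<beta>)"
    unfolding crit_root_lo_def crit_root_hi_def r_def[symmetric]
    using assms(1) by (simp add: field_simps power2_eq_square)
  also have "\<dots> = crit_poly \<beta> y"
    unfolding crit_poly_def r2 crit_disc_def using assms(1) by (simp add: field_simps power2_eq_square)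
  finally show ?thesis ..
qed

lemma crit_root_lo_le_hi:
  "0 < \<beta> \<Longrightarrow> 0 \<le> crit_disc \<beta> \<Longrightarrow> crit_root_lo \<beta> \<le> crit_root_hi \<beta>"
  unfolding crit_root_lo_def crit_root_hi_def by (simp add: divide_right_mono)

lemma crit_poly_nonneg_outside_roots:
  assumes "0 < \<beta>" "0 \<le> crit_disc \<beta>" "y \<le> crit_root_lo \<beta> \<or> crit_root_hi \<beta> \<le> y"
  shows "0 \<le> crit_poly \<beta> y"
proof -
  have "0 \<le> (y - crit_root_lo \<beta>) * (y - crit_root_hi \<beta>)"
    using assms crit_root_lo_le_hi[of \<beta>] by (auto intro: mult_nonneg_nonneg mult_nonpos_nonpos)
  then show ?thesis
    using assms by (simp add: crit_poly_eq_roots mult.assoc)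
qed

lemma crit_poly_nonpos_between_roots:
  assumes "0 < \<beta>" "0 \<le> crit_disc \<beta>" "crit_root_lo \<beta> \<le> y" "y \<le> crit_root_hi \<beta>"
  shows "crit_poly \<beta> y \<le> 0"
  using assms by (simp add: crit_poly_eq_roots mult.assoc mult_nonneg_nonpos)

lemma t_crit_eq:
  "t_crit \<beta> D = (if 0 \<le> crit_disc \<beta> \<and> crit_root_lo \<beta> \<le> real (l1norm D)
                  then real (l1norm D) - crit_root_lo \<beta> else 0)"
  unfolding t_crit_def crit_root_lo_def crit_disc_def Let_def by auto

lemma exists_sub_dataset:
  fixes D :: "'x::finite \<Rightarrow> nat"
  assumes "m \<le> l1norm D"
  shows "\<exists>D'. (\<forall>x. D' x \<le> D x) \<and> l1norm D' = m"
  using assms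
proof (induction "l1norm D - m" arbitrary: m)
  case 0
  then show ?case by auto
next
  case (Suc j)
  then have "j = l1norm D - Suc m" "Suc m \<le> l1norm D"
    by arith+
  then obtain D' where D': "\<forall>x. D' x \<le> D x" "l1norm D' = Suc m"
    using Suc.hyps(1) by blast
  then obtain x where "0 < D' x"
    unfolding l1norm_def by (metis gr0I sum.neutral nat.distinct(1))
  let ?D'' = "D'(x := D' x - 1)"
  have "l1norm D' = D' x + (\<Sum>y\<in>UNIV - {x}. D' y)"
    "l1norm ?D'' = ?D'' x + (\<Sum>y\<in>UNIV - {x}. ?D'' y)"
    unfolding l1norm_def by (simp_all add: sum.remove[of UNIV x])
  then have "l1norm ?D'' = m"
    using \<open>0 < D' x\<close> D'(2) by simp
  moreover have "\<forall>y. ?D'' y \<le> D y"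
    using D'(1) by (auto intro: le_trans[OF diff_le_self])
  ultimately show ?case by blast
qed

lemma l1dist_of_le:
  fixes D D' :: "'x::finite \<Rightarrow> nat"
  assumes "\<forall>x. D' x \<le> D x"
  shows "l1dist D' D = l1norm D - l1norm D'"
proof -
  have "l1dist D' D = (\<Sum>x\<in>UNIV. D x - D' x)"
    unfolding l1dist_def by (rule sum.cong) (use assms in auto)
  also have "\<dots> = l1norm D - l1norm D'"
    unfolding l1norm_def by (rule sum_subtractf_nat) (use assms in auto)
  finally show ?thesis .
qed

lemma l1norm_le_add_l1dist:
  fixes D D' :: "'x::finite \<Rightarrow> nat"
  shows "l1norm D \<le> l1norm D' + l1dist D' D"
proof -
  have "l1norm D \<le> (\<Sum>x\<in>UNIV. D' x + nat \<bar>int (D' x) - int (D x)\<bar>)"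
    unfolding l1norm_def by (rule sum_mono) arith
  then show ?thesis
    unfolding l1norm_def l1dist_def by (simp add: sum.distrib)
qed

lemma T_k_eq:
  fixes D :: "'x::finite \<Rightarrow> nat"
  assumes "1 \<le> \<Lambda>" "\<Lambda> \<le> l1norm D"
  shows "T_k \<Lambda> k D = gfun (real (max \<Lambda> (l1norm D - k)))"
proof -
  define m where "m = max \<Lambda> (l1norm D - k)"
  obtain D' where D': "\<forall>x. D' x \<le> D x" "l1norm D' = m"
    using exists_sub_dataset[of m D] assms unfolding m_def by auto
  then have "l1dist D' D \<le> k" "\<Lambda> \<le> l1norm D'"
    using l1dist_of_le[OF D'(1)] unfolding m_def by auto
  then have attained: "gfun (real m) \<in> {LS_gini D' | D'. l1dist D' D \<le> k \<and> l1norm D' \<ge> \<Lambda>}"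
    unfolding LS_gini_def using D'(2) by blast
  have bound: "z \<le> gfun (real m)"
    if z_mem: "z \<in> {LS_gini D' | D'. l1dist D' D \<le> k \<and> l1norm D' \<ge> \<Lambda>}" for z
  proof -
    obtain E where E: "z = LS_gini E" "l1dist E D \<le> k" "\<Lambda> \<le> l1norm E"
      using z_mem by auto
    then have "m \<le> l1norm E"
      using l1norm_le_add_l1dist[of D E] unfolding m_def by simp
    then show ?thesis
      unfolding E LS_gini_def using assms(1) by (intro gfun_antimono) (auto simp: m_def)
  qed
  show ?thesis
    unfolding T_k_def m_def[symmetric] by (rule cSup_eq_maximum[OF attained bound])
qed

lemma smooth_sens_gini_eq_SUP_xi:
  fixes D :: "'x::finite \<Rightarrow> nat"
  assumes "1 \<le> \<Lambda>" "\<Lambda> \<le> l1norm D"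
  shows "smooth_sens_gini \<Lambda> \<beta> D = (SUP k. xi \<Lambda> \<beta> D k)"
proof -
  have "exp (- \<beta> * real k) * T_k \<Lambda> k D = xi \<Lambda> \<beta> D k" for k
  proof -
    have "real (max \<Lambda> (l1norm D - k)) = max (real \<Lambda>) (real (l1norm D) - real k)"
      by (cases "k \<le> l1norm D") auto
    then show ?thesis
      unfolding T_k_eq[OF assms] xi_def by (simp add: mult.commute)
  qed
  then show ?thesis
    unfolding smooth_sens_gini_def by presburger
qed

lemma xi_eq_exp_gfun:
  fixes D :: "'x::finite \<Rightarrow> nat"
  assumes "\<Lambda> \<le> l1norm D" "k \<le> l1norm D - \<Lambda>"
  defines "n \<equiv> real (l1norm D)"
  shows "xi \<Lambda> \<beta> D k = exp (- \<beta> * n) * (exp (\<beta> * (n - real k)) * gfun (n - real k))"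
proof -
  have "max (real \<Lambda>) (n - real k) = n - real k"
    using assms by simp
  moreover have "exp (- real k * \<beta>) = exp (- \<beta> * n) * exp (\<beta> * (n - real k))"
    by (simp add: mult_exp_exp algebra_simps)
  ultimately show ?thesis
    unfolding xi_def n_def by simp
qed

lemma xi_antimono_tail:
  fixes D :: "'x::finite \<Rightarrow> nat"
  assumes "0 < \<beta>" "l1norm D - \<Lambda> \<le> i" "i \<le> j"
  shows "xi \<Lambda> \<beta> D j \<le> xi \<Lambda> \<beta> D i"
proof -
  have "max (real \<Lambda>) (real (l1norm D) - real k) = real \<Lambda>" if "i \<le> k" for k
    using assms(2) that by linarith
  then show ?thesis
    unfolding xi_def using assms gfun_nonneg[of "real \<Lambda>"] by (simp add: mult_right_mono)
qed

text \<open>Beyond \<open>\<parallel>D\<parallel>\<^sub>1 - \<Lambda>\<close> the factor \<open>g\<close> is frozen at \<open>g(\<Lambda>)\<close>, so only arguments \<open>y > \<Lambda>\<close>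
  impose a sign condition.\<close>

lemma xi_antimono:
  fixes D :: "'x::finite \<Rightarrow> nat"
  assumes "0 < \<beta>" "1 \<le> \<Lambda>" "\<Lambda> \<le> l1norm D" "i \<le> j"
    and nonneg: "\<And>y. max (real \<Lambda>) (real (l1norm D) - real j) < y \<Longrightarrow> y < real (l1norm D) - real i
                   \<Longrightarrow> 0 \<le> crit_poly \<beta> y"
  shows "xi \<Lambda> \<beta> D j \<le> xi \<Lambda> \<beta> D i"
proof (cases "l1norm D - \<Lambda> \<le> i")
  case True
  then show ?thesis using xi_antimono_tail assms(1,4) by blast
next
  case False
  define n where "n = real (l1norm D)"
  define j' where "j' = min j (l1norm D - \<Lambda>)"
  have "xi \<Lambda> \<beta> D j \<le> xi \<Lambda> \<beta> D j'"
    using xi_antimono_tail[OF assms(1), of D \<Lambda> "l1norm D - \<Lambda>" j] unfolding j'_def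
    by (cases "j \<le> l1norm D - \<Lambda>") auto
  also have "\<dots> \<le> xi \<Lambda> \<beta> D i"
  proof -
    have "max (real \<Lambda>) (n - real j) = n - real j'"
      using assms(3) unfolding j'_def n_def by auto
    then have "exp (\<beta> * (n - real j')) * gfun (n - real j') \<le> exp (\<beta> * (n - real i)) * gfun (n - real i)"
      using False assms(2,4) nonneg unfolding j'_def n_def by (intro exp_gfun_mono) auto
    then show ?thesis
      using False assms(3) unfolding j'_def n_def by (simp add: xi_eq_exp_gfun)
  qed
  finally show ?thesis .
qed

lemma xi_mono:
  fixes D :: "'x::finite \<Rightarrow> nat"
  assumes "1 \<le> \<Lambda>" "\<Lambda> \<le> l1norm D" "i \<le> j" "j \<le> l1norm D - \<Lambda>"
    and nonpos: "\<And>y. real (l1norm D) - real j < y \<Longrightarrow> y < real (l1norm D) - real i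
                   \<Longrightarrow> crit_poly \<beta> y \<le> 0"
  shows "xi \<Lambda> \<beta> D i \<le> xi \<Lambda> \<beta> D j"
proof -
  define n where "n = real (l1norm D)"
  have "exp (\<beta> * (n - real i)) * gfun (n - real i) \<le> exp (\<beta> * (n - real j)) * gfun (n - real j)"
    using assms nonpos unfolding n_def by (intro exp_gfun_antimono) auto
  then show ?thesis
    using assms unfolding n_def by (simp add: xi_eq_exp_gfun)
qed

lemma le_max_if_antimono_mono_antimono:
  fixes f :: "nat \<Rightarrow> 'a::linorder" and a b :: real
  assumes antimono_left: "\<And>i j. i \<le> j \<Longrightarrow> real j \<le> a \<Longrightarrow> f j \<le> f i"
    and mono_middle: "\<And>i j. a \<le> real i \<Longrightarrow> i \<le> j \<Longrightarrow> real j \<le> b \<Longrightarrow> f i \<le> f j"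
    and antimono_right: "\<And>i j. b \<le> real i \<Longrightarrow> i \<le> j \<Longrightarrow> f j \<le> f i"
  shows "f k \<le> max (f 0) (max (f (nat \<lfloor>b\<rfloor>)) (f (nat \<lceil>b\<rceil>)))"
proof -
  consider "real k \<le> a" | "a \<le> real k" "real k \<le> b" | "b \<le> real k"
    by linarith
  then show ?thesis
  proof cases
    case 1
    then show ?thesis using antimono_left[of 0 k] by (simp add: le_max_iff_disj)
  next
    case 2
    then have "k \<le> nat \<lfloor>b\<rfloor>" "real (nat \<lfloor>b\<rfloor>) \<le> b"
      by linarith+
    then show ?thesis using mono_middle[of k "nat \<lfloor>b\<rfloor>"] 2 by (simp add: le_max_iff_disj)
  next
    case 3
    then have "nat \<lceil>b\<rceil> \<le> k" "b \<le> real (nat \<lceil>b\<rceil>)"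
      by linarith+
    then show ?thesis using antimono_right[of "nat \<lceil>b\<rceil>" k] by (simp add: le_max_iff_disj)
  qed
qed

lemma xi_le_xi_0:
  fixes D :: "'x::finite \<Rightarrow> nat"
  assumes "0 < \<beta>" "1 \<le> \<Lambda>" "\<Lambda> \<le> l1norm D"
    and "\<not> (0 \<le> crit_disc \<beta> \<and> crit_root_lo \<beta> \<le> real (l1norm D))"
  shows "xi \<Lambda> \<beta> D k \<le> xi \<Lambda> \<beta> D 0"
proof (rule xi_antimono[OF assms(1-3)])
  fix y assume "y < real (l1norm D) - real 0"
  then show "0 \<le> crit_poly \<beta> y"
    using assms(1,4) crit_poly_pos[of \<beta> y] crit_poly_nonneg_outside_roots[of \<beta> y]
    by (cases "0 \<le> crit_disc \<beta>") auto
qed simp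

lemma xi_le_max_critical:
  fixes D :: "'x::finite \<Rightarrow> nat"
  assumes "0 < \<beta>" "1 \<le> \<Lambda>" "\<Lambda> \<le> l1norm D" "0 \<le> crit_disc \<beta>"
  defines "b \<equiv> min (real (l1norm D) - crit_root_lo \<beta>) (real (l1norm D - \<Lambda>))"
  shows "xi \<Lambda> \<beta> D k \<le> max (xi \<Lambda> \<beta> D 0) (max (xi \<Lambda> \<beta> D (nat \<lfloor>b\<rfloor>)) (xi \<Lambda> \<beta> D (nat \<lceil>b\<rceil>)))"
proof (rule le_max_if_antimono_mono_antimono[where a = "real (l1norm D) - crit_root_hi \<beta>"])
  note outside = crit_poly_nonneg_outside_roots[OF assms(1,4)]
  have K: "real (l1norm D - \<Lambda>) = real (l1norm D) - real \<Lambda>"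
    using assms(3) by simp
  show "xi \<Lambda> \<beta> D j \<le> xi \<Lambda> \<beta> D i" if "i \<le> j" "real j \<le> real (l1norm D) - crit_root_hi \<beta>" for i j
    using that by (intro xi_antimono[OF assms(1-3)] outside) auto
  show "xi \<Lambda> \<beta> D j \<le> xi \<Lambda> \<beta> D i" if "b \<le> real i" "i \<le> j" for i j
    using that K unfolding b_def by (intro xi_antimono[OF assms(1-3)] outside) auto
  show "xi \<Lambda> \<beta> D i \<le> xi \<Lambda> \<beta> D j"
    if "real (l1norm D) - crit_root_hi \<beta> \<le> real i" "i \<le> j" "real j \<le> b" for i j
  proof (rule xi_mono[OF assms(2,3) that(2)])
    show "j \<le> l1norm D - \<Lambda>"
      using that(3) unfolding b_def by linarith
    show "crit_poly \<beta> y \<le> 0" if "real (l1norm D) - real j < y" "y < real (l1norm D) - real i" for y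
      using that \<open>real j \<le> b\<close> \<open>real (l1norm D) - crit_root_hi \<beta> \<le> real i\<close>
      unfolding b_def by (intro crit_poly_nonpos_between_roots[OF assms(1,4)]) auto
  qed
qed

theorem theorem1:
  fixes D :: "'x::finite \<Rightarrow> nat" and \<Lambda> :: nat and \<beta> :: real
  assumes "\<Lambda> \<ge> 1" and "\<beta> > 0" and "l1norm D \<ge> \<Lambda>"
  shows "smooth_sens_gini \<Lambda> \<beta> D =
           Max {xi \<Lambda> \<beta> D 0,
                xi \<Lambda> \<beta> D (nat \<lfloor>t_crit \<beta> D\<rfloor>),
                xi \<Lambda> \<beta> D (nat \<lceil>t_crit \<beta> D\<rceil>),
                xi \<Lambda> \<beta> D (l1norm D - \<Lambda>)}"
    (is "_ = Max ?C")
proof -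
  have bound: "xi \<Lambda> \<beta> D k \<le> Max ?C" for k
  proof (cases "0 \<le> crit_disc \<beta> \<and> crit_root_lo \<beta> \<le> real (l1norm D)")
    case True
    define b where "b = min (real (l1norm D) - crit_root_lo \<beta>) (real (l1norm D - \<Lambda>))"
    have "b = t_crit \<beta> D \<or> b = real (l1norm D - \<Lambda>)"
      using True unfolding b_def t_crit_eq by (simp add: min_def)
    then have "xi \<Lambda> \<beta> D (nat \<lfloor>b\<rfloor>) \<in> ?C" "xi \<Lambda> \<beta> D (nat \<lceil>b\<rceil>) \<in> ?C"
      by (auto simp del: of_nat_diff)
    then show ?thesis
      using xi_le_max_critical[OF assms(2,1,3), of k] True unfolding b_def[symmetric]
      by (auto simp: le_max_iff_disj intro: Max_ge_iff[THEN iffD2])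
  next
    case False
    then show ?thesis
      using xi_le_xi_0[OF assms(2,1,3) False] by (auto intro: Max_ge_iff[THEN iffD2])
  qed
  have "Max ?C \<in> range (xi \<Lambda> \<beta> D)"
    using Max_in[of ?C] by auto
  then show ?thesis
    unfolding smooth_sens_gini_eq_SUP_xi[OF assms(1,3)] by (rule cSup_eq_maximum) (use bound in auto)
qed

end
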